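(* The conditional rewriting system $R$ is confluent.
   Context: Terms are built from variables and the constants $C,T,F,K,S$ by binary application (left-associative). $\mathrm{CLC}$ is the conditional system with rules $C\,T\,x\,y\to x$; $C\,F\,x\,y\to y$; $C\,z\,x\,y\to x \Leftarrow x=y$; $K\,x\,y\to x$; $S\,x\,y\,z\to x\,z\,(y\,z)$, where $=$ is convertibility in the system itself, defined by levels ($R_0$: condition empty; $R_{n+1}$: $=$ is conversion of $\to_{R_n}$; $\to_{\mathrm{CLC}}=\bigcup_n\to_{R_n}$); $=_{\mathrm{CLC}}$ is conversion in $\mathrm{CLC}$. $R$ is the conditional rewriting system (closed under contexts) with rules: $C\,T\,x\,y\to x$; $C\,z\,x\,y\to y \Leftarrow z=_{\mathrm{CLC}}F$; $C\,z\,x\,y\to x\Leftarrow z\neq_{\mathrm{CLC}}F \wedge x=_{\mathrm{CLC}}y$; $K\,x\,y\to x$; $S\,x\,y\,z\to x\,z\,(y\,z)$. *)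

theory Defs
  imports Main
begin

text \<open>Combinatory terms over variables of type 'v, with constants C,T,F,K,S and
binary application (left-associative: x y z means App (App x y) z).\<close>
datatype 'v trm = Var 'v | Cc | Tc | Fc | Kc | Sc | App "'v trm" "'v trm"

inductive_set ctxcl :: "('v trm \<times> 'v trm) set \<Rightarrow> ('v trm \<times> 'v trm) set"
  for Rt :: "('v trm \<times> 'v trm) set" where
  root: "(s, t) \<in> Rt \<Longrightarrow> (s, t) \<in> ctxcl Rt"
| appL: "(s, t) \<in> ctxcl Rt \<Longrightarrow> (App s u, App t u) \<in> ctxcl Rt"
| appR: "(s, t) \<in> ctxcl Rt \<Longrightarrow> (App u s, App u t) \<in> ctxcl Rt"

definition conv :: "('a \<times> 'a) set \<Rightarrow> ('a \<times> 'a) set" where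
  "conv r = (r \<union> r\<inverse>)\<^sup>*"

text \<open>Root steps of CLC, where the condition x = y of the third rule is
interpreted by the relation E.\<close>
definition clc_root :: "('v trm \<times> 'v trm) set \<Rightarrow> ('v trm \<times> 'v trm) set" where
  "clc_root E =
     {(App (App (App Cc Tc) x) y, x) | x y. True}
   \<union> {(App (App (App Cc Fc) x) y, y) | x y. True}
   \<union> {(App (App (App Cc z) x) y, x) | x y z. (x, y) \<in> E}
   \<union> {(App (App Kc x) y, x) | x y. True}
   \<union> {(App (App (App Sc x) y) z, App (App x z) (App y z)) | x y z. True}"

text \<open>Levels: R_0 with empty condition (conditional rule not applicable),
R_{n+1} with the condition read as conversion of R_n.\<close>
primrec clc_lvl :: "nat \<Rightarrow> ('v trm \<times> 'v trm) set" where
  "clc_lvl 0 = ctxcl (clc_root {})"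
| "clc_lvl (Suc n) = ctxcl (clc_root (conv (clc_lvl n)))"

definition clc_step :: "('v trm \<times> 'v trm) set" where
  "clc_step = (\<Union>n. clc_lvl n)"

definition clc_eq :: "('v trm \<times> 'v trm) set" where
  "clc_eq = conv clc_step"

definition R_root :: "('v trm \<times> 'v trm) set" where
  "R_root =
     {(App (App (App Cc Tc) x) y, x) | x y. True}
   \<union> {(App (App (App Cc z) x) y, y) | x y z. (z, Fc) \<in> clc_eq}
   \<union> {(App (App (App Cc z) x) y, x) | x y z. (z, Fc) \<notin> clc_eq \<and> (x, y) \<in> clc_eq}
   \<union> {(App (App Kc x) y, x) | x y. True}
   \<union> {(App (App (App Sc x) y) z, App (App x z) (App y z)) | x y z. True}"

definition R_step :: "('v trm \<times> 'v trm) set" where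
  "R_step = ctxcl R_root"

definition confluent_rel :: "('a \<times> 'a) set \<Rightarrow> bool" where
  "confluent_rel r \<longleftrightarrow>
     (\<forall>a b c. (a, b) \<in> r\<^sup>* \<and> (a, c) \<in> r\<^sup>* \<longrightarrow> (\<exists>d. (b, d) \<in> r\<^sup>* \<and> (c, d) \<in> r\<^sup>*))"

end

theory Submission
  imports Defs "HOL-Library.Confluence"
begin

text \<open>
  The conditions of \<open>R\<close> refer to the fixed relation \<open>=\<^sub>C\<^sub>L\<^sub>C\<close>, which is a congruence
  containing every step of \<open>R\<close>. Hence the conditions are stable under reduction and \<open>R\<close>
  behaves like an unconditional system: parallel reduction has the triangle property
  with respect to complete development (Takahashi), and \<open>R\<close> is confluent. The only overlap
  that could break this, a redex \<open>C T x y\<close> with \<open>T =\<^sub>C\<^sub>L\<^sub>C F\<close>, is excluded by the consistency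
  of CLC, which we obtain from an Engeler-style graph model with atoms for \<open>T\<close> and \<open>F\<close>.
\<close>

section \<open>Abstract rewriting\<close>

lemma conv_refl [simp]: "(a, a) \<in> conv r"
  unfolding conv_def by simp

lemma r_into_conv: "(a, b) \<in> r \<Longrightarrow> (a, b) \<in> conv r"
  unfolding conv_def by auto

lemma conv_sym: "(a, b) \<in> conv r \<Longrightarrow> (b, a) \<in> conv r"
  unfolding conv_def
  by (metis converse_Un converse_converse rtrancl_converseI sup_commute)

lemma conv_trans: "(a, b) \<in> conv r \<Longrightarrow> (b, c) \<in> conv r \<Longrightarrow> (a, c) \<in> conv r"
  unfolding conv_def by (rule rtrancl_trans)

lemma conv_mono: "r \<subseteq> s \<Longrightarrow> conv r \<subseteq> conv s"
  unfolding conv_def by (rule rtrancl_mono) blast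

lemma conv_preserves:
  assumes "(a, b) \<in> conv r" and "\<And>a b. (a, b) \<in> r \<Longrightarrow> f a = f b"
  shows "f a = f b"
  using assms(1) unfolding conv_def
proof (induction rule: rtrancl_induct)
  case (step b c)
  then show ?case using assms(2)[of b c] assms(2)[of c b] by auto
qed simp

lemma rtrancl_map:
  assumes "(a, b) \<in> r\<^sup>*" and "\<And>a b. (a, b) \<in> r \<Longrightarrow> (f a, f b) \<in> r"
  shows "(f a, f b) \<in> r\<^sup>*"
  using assms(1)
proof (induction rule: rtrancl_induct)
  case (step b c)
  from step.IH assms(2)[OF step.hyps(2)] show ?case by (rule rtrancl_into_rtrancl)
qed simp

lemma conv_map:
  assumes "(a, b) \<in> conv r" and "\<And>a b. (a, b) \<in> r \<Longrightarrow> (f a, f b) \<in> r"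
  shows "(f a, f b) \<in> conv r"
  using assms(1) unfolding conv_def by (rule rtrancl_map) (auto dest: assms(2))

lemma conv_UN_chain:
  fixes r :: "nat \<Rightarrow> ('a \<times> 'a) set"
  assumes "mono r" and "(a, b) \<in> conv (\<Union>n. r n)"
  shows "\<exists>n. (a, b) \<in> conv (r n)"
  using assms(2) unfolding conv_def
proof (induction rule: rtrancl_induct)
  case (step b c)
  then obtain n m where "(a, b) \<in> (r n \<union> (r n)\<inverse>)\<^sup>*" and "(b, c) \<in> r m \<union> (r m)\<inverse>"
    by blast
  moreover have "r n \<subseteq> r (max n m)" "r m \<subseteq> r (max n m)"
    using \<open>mono r\<close> by (simp_all add: monoD)
  ultimately have "(a, b) \<in> (r (max n m) \<union> (r (max n m))\<inverse>)\<^sup>*"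
    and "(b, c) \<in> r (max n m) \<union> (r (max n m))\<inverse>"
    by (meson Un_mono converse_mono rtrancl_mono subsetD)+
  then show ?case by (blast intro: rtrancl_into_rtrancl)
qed blast

lemma confluent_rel_iff_confluentp: "confluent_rel r \<longleftrightarrow> confluentp (\<lambda>x y. (x, y) \<in> r)"
proof -
  have star: "(\<lambda>x y. (x, y) \<in> r)\<^sup>*\<^sup>* = (\<lambda>x y. (x, y) \<in> r\<^sup>*)"
    by (simp add: rtrancl_def)
  show ?thesis
  proof
    assume "confluent_rel r"
    then show "confluentp (\<lambda>x y. (x, y) \<in> r)"
      unfolding confluent_rel_def by (intro confluentpI) (simp add: star)
  next
    assume "confluentp (\<lambda>x y. (x, y) \<in> r)"
    from confluentpD[OF this] show "confluent_rel r"
      unfolding confluent_rel_def star by blast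
  qed
qed

lemma confluent_rel_if_triangle:
  assumes "\<And>s t. (s, t) \<in> r \<Longrightarrow> (t, f s) \<in> r"
  shows "confluent_rel r"
proof -
  have "strong_confluentp (\<lambda>x y. (x, y) \<in> r)"
    by (rule strong_confluentpI) (use assms in blast)
  then show ?thesis
    unfolding confluent_rel_iff_confluentp by (rule strong_confluentp_imp_confluentp)
qed

lemma confluent_rel_cong_rtrancl: "r\<^sup>* = s\<^sup>* \<Longrightarrow> confluent_rel r \<longleftrightarrow> confluent_rel s"
  unfolding confluent_rel_def by simp

lemma ctxcl_mono:
  assumes "A \<subseteq> B"
  shows "ctxcl A \<subseteq> ctxcl B"
proof (rule subrelI)
  fix s t assume "(s, t) \<in> ctxcl A"
  then show "(s, t) \<in> ctxcl B"
    by induction (use assms in \<open>auto intro: ctxcl.intros\<close>)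
qed

section \<open>Consistency of CLC\<close>

datatype gelem = Atom nat | Arrow "gelem list" gelem

definition gapp :: "gelem set \<Rightarrow> gelem set \<Rightarrow> gelem set" where
  "gapp X Y = {b. \<exists>\<beta>. set \<beta> \<subseteq> Y \<and> Arrow \<beta> b \<in> X}"

definition gK :: "gelem set" where
  "gK = {Arrow [a] (Arrow \<beta> a) | a \<beta>. True}"

definition gS :: "gelem set" where
  "gS = {Arrow [Arrow \<eta> (Arrow (map snd ps) b)]
           (Arrow (map (\<lambda>(e, d). Arrow e d) ps) (Arrow (\<eta> @ concat (map fst ps)) b))
         | \<eta> ps b. True}"

text \<open>\<open>Atom 0\<close> and \<open>Atom 1\<close> interpret \<open>T\<close> and \<open>F\<close>. The third part of \<open>gC\<close> yields
  \<open>X \<inter> Y\<close>, which validates the conditional rule because its condition forces \<open>X = Y\<close>.\<close>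
definition gC :: "gelem set" where
  "gC = {Arrow [Atom 0] (Arrow [a] (Arrow [] a)) | a. True}
      \<union> {Arrow [Atom 1] (Arrow [] (Arrow [a] a)) | a. True}
      \<union> {Arrow [] (Arrow [a] (Arrow [a] a)) | a. True}"

lemma gapp_gK: "gapp (gapp gK X) Y = X"
  unfolding gapp_def gK_def by auto (metis empty_set empty_subsetI)

lemma gappI: "Arrow \<beta> b \<in> X \<Longrightarrow> set \<beta> \<subseteq> Y \<Longrightarrow> b \<in> gapp X Y"
  unfolding gapp_def by blast

lemma gapp_NilI: "Arrow [] b \<in> X \<Longrightarrow> b \<in> gapp X Y"
  by (rule gappI[of "[]"]) simp_all

lemma gapp_singletonI: "Arrow [c] b \<in> X \<Longrightarrow> c \<in> Y \<Longrightarrow> b \<in> gapp X Y"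
  by (rule gappI[of "[c]"]) simp_all

lemma gapp_gC:
  "gapp (gapp (gapp gC Z) X) Y =
     {a. (Atom 0 \<in> Z \<and> a \<in> X) \<or> (Atom 1 \<in> Z \<and> a \<in> Y) \<or> (a \<in> X \<and> a \<in> Y)}"
proof (intro set_eqI iffI)
  fix a assume "a \<in> gapp (gapp (gapp gC Z) X) Y"
  then show "a \<in> {a. (Atom 0 \<in> Z \<and> a \<in> X) \<or> (Atom 1 \<in> Z \<and> a \<in> Y) \<or> (a \<in> X \<and> a \<in> Y)}"
    unfolding gapp_def gC_def by auto
qed (unfold gC_def, blast intro: gapp_NilI gapp_singletonI)

lemma ex_pairs_map_snd:
  assumes "\<forall>d\<in>set ds. \<exists>e. P e d"
  shows "\<exists>ps. map snd ps = ds \<and> (\<forall>(e, d)\<in>set ps. P e d)"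
  using assms
proof (induction ds)
  case (Cons d ds)
  then obtain e ps where "P e d" "map snd ps = ds" "\<forall>(e, d)\<in>set ps. P e d" by auto
  then show ?case by (intro exI[of _ "(e, d) # ps"]) auto
qed simp

lemma gapp_gS: "gapp (gapp (gapp gS X) Y) Z = gapp (gapp X Z) (gapp Y Z)"
proof (intro set_eqI iffI)
  fix b assume "b \<in> gapp (gapp (gapp gS X) Y) Z"
  then obtain \<alpha> \<gamma> \<beta> where "Arrow \<alpha> (Arrow \<gamma> (Arrow \<beta> b)) \<in> gS"
    and "set \<alpha> \<subseteq> X" "set \<gamma> \<subseteq> Y" "set \<beta> \<subseteq> Z"
    unfolding gapp_def by blast
  then obtain \<eta> ps where \<eta>: "Arrow \<eta> (Arrow (map snd ps) b) \<in> X" "set \<eta> \<subseteq> Z"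
    and ps: "set (map (\<lambda>(e, d). Arrow e d) ps) \<subseteq> Y" "set (concat (map fst ps)) \<subseteq> Z"
    unfolding gS_def by auto
  have "d \<in> gapp Y Z" if "(e, d) \<in> set ps" for e d
    using that ps by (intro gappI[of e]) force+
  then have "set (map snd ps) \<subseteq> gapp Y Z"
    by auto
  with \<eta> show "b \<in> gapp (gapp X Z) (gapp Y Z)"
    unfolding gapp_def by blast
next
  fix b assume "b \<in> gapp (gapp X Z) (gapp Y Z)"
  then obtain \<delta> \<eta> where \<delta>: "\<forall>d\<in>set \<delta>. \<exists>e. set e \<subseteq> Z \<and> Arrow e d \<in> Y"
    and \<eta>: "set \<eta> \<subseteq> Z" "Arrow \<eta> (Arrow \<delta> b) \<in> X"
    unfolding gapp_def by blast
  obtain ps where ps: "map snd ps = \<delta>" "\<forall>(e, d)\<in>set ps. set e \<subseteq> Z \<and> Arrow e d \<in> Y"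
    using ex_pairs_map_snd[OF \<delta>] by blast
  let ?\<gamma> = "map (\<lambda>(e, d). Arrow e d) ps" and ?\<beta> = "\<eta> @ concat (map fst ps)"
  have "Arrow [Arrow \<eta> (Arrow (map snd ps) b)] (Arrow ?\<gamma> (Arrow ?\<beta> b)) \<in> gS"
    unfolding gS_def by blast
  then have "Arrow ?\<gamma> (Arrow ?\<beta> b) \<in> gapp gS X"
    using \<eta>(2) ps(1) by (auto intro: gappI)
  moreover have "set ?\<gamma> \<subseteq> Y" "set ?\<beta> \<subseteq> Z"
    using ps(2) \<eta>(1) by fastforce+
  ultimately show "b \<in> gapp (gapp (gapp gS X) Y) Z"
    by (blast intro: gappI)
qed

text \<open>Variables may be interpreted arbitrarily; we take the empty set.\<close>
primrec denot :: "'v trm \<Rightarrow> gelem set" where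
  "denot (Var v) = {}"
| "denot Cc = gC"
| "denot Tc = {Atom 0}"
| "denot Fc = {Atom 1}"
| "denot Kc = gK"
| "denot Sc = gS"
| "denot (App a b) = gapp (denot a) (denot b)"

lemma denot_clc_root:
  assumes "(s, t) \<in> clc_root E" and "\<And>a b. (a, b) \<in> E \<Longrightarrow> denot a = denot b"
  shows "denot s = denot t"
  using assms unfolding clc_root_def by (auto simp: gapp_gK gapp_gC gapp_gS)

lemma denot_ctxcl:
  assumes "(s, t) \<in> ctxcl A" and "\<And>a b. (a, b) \<in> A \<Longrightarrow> denot a = denot b"
  shows "denot s = denot t"
  using assms(1) by induction (simp_all add: assms(2))

lemma denot_clc_lvl: "(s, t) \<in> clc_lvl n \<Longrightarrow> denot s = denot t"
proof (induction n arbitrary: s t)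
  case 0
  then show ?case
    by (simp, elim denot_ctxcl denot_clc_root) simp
next
  case (Suc n)
  then show ?case
    by (simp, elim denot_ctxcl denot_clc_root conv_preserves) (rule Suc.IH)
qed

lemma Tc_Fc_not_clc_eq: "(Tc, Fc) \<notin> (clc_eq :: ('v trm \<times> 'v trm) set)"
proof
  assume "(Tc, Fc) \<in> (clc_eq :: ('v trm \<times> 'v trm) set)"
  then have "denot (Tc :: 'v trm) = denot (Fc :: 'v trm)"
    unfolding clc_eq_def
  proof (rule conv_preserves)
    fix a b assume "(a, b) \<in> clc_step"
    then show "denot a = denot b"
      unfolding clc_step_def by (blast dest: denot_clc_lvl)
  qed
  then show False by simp
qed

lemma clc_root_mono: "E \<subseteq> E' \<Longrightarrow> clc_root E \<subseteq> clc_root E'"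
  unfolding clc_root_def by blast

lemma clc_lvl_Suc_mono: "clc_lvl n \<subseteq> clc_lvl (Suc n)"
proof (induction n)
  case 0
  show ?case by (simp only: clc_lvl.simps) (intro ctxcl_mono clc_root_mono, simp)
next
  case (Suc n)
  then show ?case by (simp only: clc_lvl.simps) (intro ctxcl_mono clc_root_mono conv_mono)
qed

lemma mono_clc_lvl: "mono clc_lvl"
  unfolding mono_iff_le_Suc using clc_lvl_Suc_mono by blast

lemma clc_lvl_App:
  "(a, b) \<in> clc_lvl n \<Longrightarrow> (App a c, App b c) \<in> clc_lvl n \<and> (App c a, App c b) \<in> clc_lvl n"
  by (cases n) (auto intro: ctxcl.appL ctxcl.appR)

lemma clc_eq_refl [simp]: "(a, a) \<in> clc_eq"
  unfolding clc_eq_def by simp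

lemma clc_eq_sym: "(a, b) \<in> clc_eq \<Longrightarrow> (b, a) \<in> clc_eq"
  unfolding clc_eq_def by (rule conv_sym)

lemma clc_eq_trans: "(a, b) \<in> clc_eq \<Longrightarrow> (b, c) \<in> clc_eq \<Longrightarrow> (a, c) \<in> clc_eq"
  unfolding clc_eq_def by (rule conv_trans)

lemma clc_eq_App:
  assumes "(a, a') \<in> clc_eq" and "(b, b') \<in> clc_eq"
  shows "(App a b, App a' b') \<in> clc_eq"
proof -
  have "(App a b, App a' b) \<in> clc_eq"
    using assms(1) unfolding clc_eq_def
    by (rule conv_map[where f = "\<lambda>x. App x b"]) (auto simp: clc_step_def dest: clc_lvl_App)
  moreover have "(App a' b, App a' b') \<in> clc_eq"
    using assms(2) unfolding clc_eq_def
    by (rule conv_map[where f = "App a'"]) (auto simp: clc_step_def dest: clc_lvl_App)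
  ultimately show ?thesis by (rule clc_eq_trans)
qed

text \<open>A condition that holds already holds at some finite level, since the levels form a chain.\<close>
lemma clc_root_clc_eq_into_clc_eq:
  assumes "(s, t) \<in> clc_root clc_eq"
  shows "(s, t) \<in> clc_eq"
proof -
  have "\<exists>n. (s, t) \<in> clc_root (conv (clc_lvl n))"
  proof (cases "(s, t) \<in> clc_root {}")
    case True
    then show ?thesis by (auto simp: clc_root_def)
  next
    case False
    with assms obtain x y z where "s = App (App (App Cc z) x) y" "t = x" "(x, y) \<in> clc_eq"
      by (auto simp: clc_root_def)
    moreover obtain n where "(x, y) \<in> conv (clc_lvl n)"
      using conv_UN_chain[OF mono_clc_lvl] \<open>(x, y) \<in> clc_eq\<close>
      unfolding clc_eq_def clc_step_def by blast
    ultimately show ?thesis by (auto simp: clc_root_def)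
  qed
  then obtain n where "(s, t) \<in> clc_lvl (Suc n)"
    by (auto intro: ctxcl.root)
  then show ?thesis
    unfolding clc_eq_def clc_step_def by (blast intro: r_into_conv)
qed

section \<open>Parallel reduction and complete development\<close>

inductive_set R_par :: "('v trm \<times> 'v trm) set" where
  refl: "(t, t) \<in> R_par"
| App: "(a, a') \<in> R_par \<Longrightarrow> (b, b') \<in> R_par \<Longrightarrow> (App a b, App a' b') \<in> R_par"
| C_T: "(x, x') \<in> R_par \<Longrightarrow> (App (App (App Cc Tc) x) y, x') \<in> R_par"
| C_F: "(z, Fc) \<in> clc_eq \<Longrightarrow> (y, y') \<in> R_par \<Longrightarrow> (App (App (App Cc z) x) y, y') \<in> R_par"
| C_eq: "(z, Fc) \<notin> clc_eq \<Longrightarrow> (x, y) \<in> clc_eq \<Longrightarrow> (x, x') \<in> R_par \<Longrightarrow>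
    (App (App (App Cc z) x) y, x') \<in> R_par"
| K: "(x, x') \<in> R_par \<Longrightarrow> (App (App Kc x) y, x') \<in> R_par"
| S: "(x, x') \<in> R_par \<Longrightarrow> (y, y') \<in> R_par \<Longrightarrow> (z, z') \<in> R_par \<Longrightarrow>
    (App (App (App Sc x) y) z, App (App x' z') (App y' z')) \<in> R_par"

lemma R_par_clc_eq: "(s, t) \<in> R_par \<Longrightarrow> (s, t) \<in> clc_eq"
proof (induction rule: R_par.induct)
  case (C_T x x' y)
  have "(App (App (App Cc Tc) x) y, x) \<in> clc_eq"
    by (rule clc_root_clc_eq_into_clc_eq) (auto simp: clc_root_def)
  with C_T.IH show ?case by (blast intro: clc_eq_trans)
next
  case (C_F z y y' x)
  have "(App (App (App Cc z) x) y, App (App (App Cc Fc) x) y) \<in> clc_eq"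
    using C_F.hyps(1) by (simp add: clc_eq_App)
  moreover have "(App (App (App Cc Fc) x) y, y) \<in> clc_eq"
    by (rule clc_root_clc_eq_into_clc_eq) (auto simp: clc_root_def)
  ultimately show ?case using C_F.IH by (blast intro: clc_eq_trans)
next
  case (C_eq z x y x')
  have "(App (App (App Cc z) x) y, x) \<in> clc_eq"
    using C_eq.hyps(2) by (intro clc_root_clc_eq_into_clc_eq) (auto simp: clc_root_def)
  with C_eq.IH show ?case by (blast intro: clc_eq_trans)
next
  case (K x x' y)
  have "(App (App Kc x) y, x) \<in> clc_eq"
    by (rule clc_root_clc_eq_into_clc_eq) (auto simp: clc_root_def)
  with K.IH show ?case by (blast intro: clc_eq_trans)
next
  case (S x x' y y' z z')
  have "(App (App (App Sc x) y) z, App (App x z) (App y z)) \<in> clc_eq"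
    by (rule clc_root_clc_eq_into_clc_eq) (auto simp: clc_root_def)
  moreover have "(App (App x z) (App y z), App (App x' z') (App y' z')) \<in> clc_eq"
    using S.IH by (simp add: clc_eq_App)
  ultimately show ?case by (rule clc_eq_trans)
qed (simp_all add: clc_eq_App)

lemma R_par_clc_eq_Fc_iff: "(z, z') \<in> R_par \<Longrightarrow> (z, Fc) \<in> clc_eq \<longleftrightarrow> (z', Fc) \<in> clc_eq"
  by (meson R_par_clc_eq clc_eq_sym clc_eq_trans)

lemma R_par_constE: "(c, w) \<in> R_par \<Longrightarrow> c \<in> {Cc, Tc, Kc, Sc} \<Longrightarrow> w = c"
  by (auto elim: R_par.cases)

lemma R_par_App_constE:
  assumes "(App c x, w) \<in> R_par" and "c \<in> {Cc, Kc, Sc}"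
  obtains x' where "w = App c x'" "(x, x') \<in> R_par"
  using assms by (cases rule: R_par.cases) (auto dest: R_par_constE intro: R_par.refl)

lemma R_par_App_CcE:
  assumes "(App (App Cc z) x, w) \<in> R_par"
  obtains z' x' where "w = App (App Cc z') x'" "(z, z') \<in> R_par" "(x, x') \<in> R_par"
  using assms
  by (cases rule: R_par.cases) (auto elim: R_par_App_constE[where c = Cc] intro: R_par.refl)

lemma R_par_App_ScE:
  assumes "(App (App Sc x) y, w) \<in> R_par"
  obtains x' y' where "w = App (App Sc x') y'" "(x, x') \<in> R_par" "(y, y') \<in> R_par"
  using assms
  by (cases rule: R_par.cases) (auto elim: R_par_App_constE[where c = Sc] intro: R_par.refl)

fun R_dev :: "'v trm \<Rightarrow> 'v trm" where
  "R_dev (App (App (App Cc z) x) y) =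
     (if z = Tc then R_dev x
      else if (z, Fc) \<in> clc_eq then R_dev y
      else if (x, y) \<in> clc_eq then R_dev x
      else App (App (App Cc (R_dev z)) (R_dev x)) (R_dev y))"
| "R_dev (App (App Kc x) y) = R_dev x"
| "R_dev (App (App (App Sc x) y) z) = App (App (R_dev x) (R_dev z)) (App (R_dev y) (R_dev z))"
| "R_dev (App a b) = App (R_dev a) (R_dev b)"
| "R_dev t = t"

lemma R_dev_App:
  assumes "\<And>z x. a \<noteq> App (App Cc z) x" "\<And>x. a \<noteq> App Kc x" "\<And>x y. a \<noteq> App (App Sc x) y"
  shows "R_dev (App a b) = App (R_dev a) (R_dev b)"
  using assms by (cases "App a b" rule: R_dev.cases) auto

lemma R_par_R_dev: "(t, R_dev t) \<in> R_par"
  by (induction t rule: R_dev.induct) (auto intro: R_par.intros simp: Tc_Fc_not_clc_eq)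

lemma R_par_triangle_App_Cc:
  assumes "(App (App Cc z) x, a') \<in> R_par" and "(a', App (App Cc (R_dev z)) (R_dev x)) \<in> R_par"
    and "(y, y') \<in> R_par" and "(y', R_dev y) \<in> R_par"
  shows "(App a' y', R_dev (App (App (App Cc z) x) y)) \<in> R_par"
proof -
  obtain z' x' where a': "a' = App (App Cc z') x'" and "(z, z') \<in> R_par" "(x, x') \<in> R_par"
    using assms(1) by (rule R_par_App_CcE)
  from assms(2) have z': "(z', R_dev z) \<in> R_par" and x': "(x', R_dev x) \<in> R_par"
    unfolding a' by (auto elim: R_par_App_CcE)
  consider "z = Tc" | "z \<noteq> Tc" "(z, Fc) \<in> clc_eq"
    | "z \<noteq> Tc" "(z, Fc) \<notin> clc_eq" "(x, y) \<in> clc_eq"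
    | "z \<noteq> Tc" "(z, Fc) \<notin> clc_eq" "(x, y) \<notin> clc_eq"
    by blast
  then show ?thesis
  proof cases
    case 1
    with \<open>(z, z') \<in> R_par\<close> have "z' = Tc" by (auto dest: R_par_constE)
    with 1 x' show ?thesis by (simp add: a' R_par.C_T)
  next
    case 2
    with \<open>(z, z') \<in> R_par\<close> have "(z', Fc) \<in> clc_eq" by (simp add: R_par_clc_eq_Fc_iff)
    with 2 assms(4) show ?thesis by (simp add: a' R_par.C_F)
  next
    case 3
    with \<open>(z, z') \<in> R_par\<close> have "(z', Fc) \<notin> clc_eq" by (simp add: R_par_clc_eq_Fc_iff)
    moreover have "(x', y') \<in> clc_eq"
      using 3 \<open>(x, x') \<in> R_par\<close> assms(3)
      by (meson R_par_clc_eq clc_eq_sym clc_eq_trans)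
    ultimately show ?thesis using 3 x' by (simp add: a' R_par.C_eq)
  next
    case 4
    then show ?thesis by (simp add: a') (intro R_par.App R_par.refl z' x' assms(4))
  qed
qed

text \<open>Consistency of CLC is needed in the case \<open>C_F\<close> with \<open>z = T\<close>.\<close>
lemma R_par_triangle: "(t, s) \<in> R_par \<Longrightarrow> (s, R_dev t) \<in> R_par"
proof (induction rule: R_par.induct)
  case (refl t)
  then show ?case by (rule R_par_R_dev)
next
  case (App a a' b b')
  consider z x where "a = App (App Cc z) x" | x where "a = App Kc x"
    | x y where "a = App (App Sc x) y"
    | "\<And>z x. a \<noteq> App (App Cc z) x" "\<And>x. a \<noteq> App Kc x" "\<And>x y. a \<noteq> App (App Sc x) y"
    by blast
  then show ?case
  proof cases
    case (1 z x)
    with App.IH(1) have "(a', App (App Cc (R_dev z)) (R_dev x)) \<in> R_par" by simp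
    with App.hyps App.IH(2) show ?thesis unfolding 1 by (intro R_par_triangle_App_Cc) (simp_all add: 1)
  next
    case (2 x)
    with App.hyps(1) obtain x' where "a' = App Kc x'" by (auto elim: R_par_App_constE)
    with 2 App.IH(1) show ?thesis by (auto elim: R_par_App_constE intro: R_par.K)
  next
    case (3 x y)
    with App.hyps(1) obtain x' y' where "a' = App (App Sc x') y'" by (auto elim: R_par_App_ScE)
    with 3 App.IH show ?thesis by (auto elim: R_par_App_ScE intro: R_par.S)
  next
    case 4
    with App.IH show ?thesis by (simp add: R_dev_App R_par.App)
  qed
qed (auto simp: Tc_Fc_not_clc_eq intro: R_par.intros)

lemma rtrancl_ctxcl_App:
  assumes "(a, a') \<in> (ctxcl A)\<^sup>*" and "(b, b') \<in> (ctxcl A)\<^sup>*"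
  shows "(App a b, App a' b') \<in> (ctxcl A)\<^sup>*"
proof -
  have "(App a b, App a' b) \<in> (ctxcl A)\<^sup>*"
    using assms(1) by (rule rtrancl_map[where f = "\<lambda>x. App x b"]) (rule ctxcl.appL)
  moreover have "(App a' b, App a' b') \<in> (ctxcl A)\<^sup>*"
    using assms(2) by (rule rtrancl_map[where f = "App a'"]) (rule ctxcl.appR)
  ultimately show ?thesis by (rule rtrancl_trans)
qed

lemma R_step_subset_R_par: "R_step \<subseteq> R_par"
proof (rule subrelI)
  fix s t assume "(s, t) \<in> R_step"
  then show "(s, t) \<in> R_par"
    unfolding R_step_def
    by induction (auto simp: R_root_def intro: R_par.intros)
qed

lemma R_root_rtrancl_trans: "(s, u) \<in> R_root \<Longrightarrow> (u, t) \<in> R_step\<^sup>* \<Longrightarrow> (s, t) \<in> R_step\<^sup>*"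
  unfolding R_step_def by (blast intro: ctxcl.root converse_rtrancl_into_rtrancl)

lemma R_par_subset_rtrancl_R_step: "R_par \<subseteq> R_step\<^sup>*"
proof (rule subrelI)
  fix s t assume "(s, t) \<in> R_par"
  then show "(s, t) \<in> R_step\<^sup>*"
  proof induction
    case (App a a' b b')
    from App.IH show ?case unfolding R_step_def by (rule rtrancl_ctxcl_App)
  next
    case (C_T x x' y)
    from C_T.IH show ?case by (rule R_root_rtrancl_trans[rotated]) (auto simp: R_root_def)
  next
    case (C_F z y y' x)
    from C_F.IH show ?case
      by (rule R_root_rtrancl_trans[rotated]) (use C_F.hyps in \<open>auto simp: R_root_def\<close>)
  next
    case (C_eq z x y x')
    from C_eq.IH show ?case
      by (rule R_root_rtrancl_trans[rotated]) (use C_eq.hyps in \<open>auto simp: R_root_def\<close>)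
  next
    case (K x x' y)
    from K.IH show ?case by (rule R_root_rtrancl_trans[rotated]) (auto simp: R_root_def)
  next
    case (S x x' y y' z z')
    have "(App (App x z) (App y z), App (App x' z') (App y' z')) \<in> R_step\<^sup>*"
      using S.IH unfolding R_step_def by (intro rtrancl_ctxcl_App)
    then show ?case by (rule R_root_rtrancl_trans[rotated]) (auto simp: R_root_def)
  qed simp
qed

theorem mainTheorem6:
  shows "confluent_rel (R_step :: ('v trm \<times> 'v trm) set)"
proof -
  have "R_par\<^sup>* = (R_step :: ('v trm \<times> 'v trm) set)\<^sup>*"
    using R_step_subset_R_par R_par_subset_rtrancl_R_step by (rule rtrancl_subset)
  moreover have "confluent_rel (R_par :: ('v trm \<times> 'v trm) set)"
    using R_par_triangle by (rule confluent_rel_if_triangle)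
  ultimately show ?thesis
    using confluent_rel_cong_rtrancl by blast
qed

end
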